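(* Let $\rho<r<1$, and let $\lambda>0$ and $\mathcal{D}\in\mathcal{M}_S$ satisfy $\mathcal{R}_r\mathcal{D}=\lambda\mathcal{D}$. Then \[\Big(\frac{1}{1-r}-\frac{r}{2+2r+2r^2}\Big)^{-1}\leq\lambda\leq\frac{2}{2+r}.\]
   Context: Let $q_0=(\tfrac12,\tfrac{\sqrt3}{2})$, $q_1=(0,0)$, $q_2=(1,0)$, $\rho=\frac{\sqrt5-1}{2}$, $F_0(x)=\rho^2(x-q_0)+q_0$, $F_1(x)=\rho(x-q_1)+q_1$, $F_2(x)=\rho(x-q_2)+q_2$. For a finite word $w$ over $\{0,1,2\}$, $|w|$ is its length and $F_w=F_{w_1}\circ\cdots\circ F_{w_{|w|}}$. $W_1$ is a set of words of the form $w_1\cdots w_n0$ ($n\ge0$, $w_i\in\{1,2\}$) containing exactly one word for each distinct map $F_w$ of this form. $V_0=\{q_0,q_1,q_2\}$, $V_1=\bigcup_{w\in W_1}F_wV_0$. $\mathcal{M}$ is the set of forms $\mathcal{D}(f,g)=\frac12\sum_{i,j}a_{ij}(f(q_i)-f(q_j))(g(q_i)-g(q_j))$ on functions on $V_0$ with $(a_{ij})$ symmetric, $a_{ii}=0$, $a_{ij}\ge0$ and irreducible; $\mathcal{M}_S$ is the subset with $a_{01}=a_{02}$. $\Psi_r\mathcal{D}(f,g)=\sum_{w\in W_1}r^{-|w|+1}\mathcal{D}(f\circ F_w,g\circ F_w)$ on $\mathrm{Dom}(\Psi_r\mathcal{D})=\{f:V_1\to\mathbb{R}:\Psi_r\mathcal{D}(f,f)<\infty\}$,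 and for $\rho<r<1$, $\mathcal{R}_r\mathcal{D}(u)=\inf\{\Psi_r\mathcal{D}(f):f\in\mathrm{Dom}(\Psi_r\mathcal{D}),f|_{V_0}=u\}$ for $u:V_0\to\mathbb{R}$. *)

theory Defs
  imports "HOL-Analysis.Analysis"
begin

definition rho :: real where
  "rho = (sqrt 5 - 1) / 2"

definition q :: "nat \<Rightarrow> real \<times> real" where
  "q i = (if i = 0 then (1/2, sqrt 3 / 2) else if i = 1 then (0, 0) else (1, 0))"

definition F :: "nat \<Rightarrow> real \<times> real \<Rightarrow> real \<times> real" where
  "F i x = (if i = 0 then rho\<^sup>2 *\<^sub>R (x - q 0) + q 0 else rho *\<^sub>R (x - q i) + q i)"

definition Fw :: "nat list \<Rightarrow> real \<times> real \<Rightarrow> real \<times> real" where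
  "Fw w = foldr (\<lambda>i g. F i \<circ> g) w id"

definition words0 :: "nat list set" where
  "words0 = {ws @ [0] | ws. set ws \<subseteq> {1, 2}}"

definition is_W1 :: "nat list set \<Rightarrow> bool" where
  "is_W1 W \<longleftrightarrow> W \<subseteq> words0 \<and> (\<forall>w\<in>words0. \<exists>!v. v \<in> W \<and> Fw v = Fw w)"

definition V1 :: "nat list set \<Rightarrow> (real \<times> real) set" where
  "V1 W = (\<Union>w\<in>W. Fw w ` q ` {0, 1, 2})"

text \<open>The form D(f,g) with coefficient matrix a; functions on V_0 are given by their
  values at q_0, q_1, q_2, i.e. as functions on the index set {0,1,2}.\<close>
definition DF :: "(nat \<Rightarrow> nat \<Rightarrow> real) \<Rightarrow> (nat \<Rightarrow> real) \<Rightarrow> (nat \<Rightarrow> real) \<Rightarrow> real" where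
  "DF a f g = (1/2) * (\<Sum>i<3. \<Sum>j<3. a i j * (f i - f j) * (g i - g j))"

definition irreducible3 :: "(nat \<Rightarrow> nat \<Rightarrow> real) \<Rightarrow> bool" where
  "irreducible3 a \<longleftrightarrow>
     (\<forall>S. S \<subseteq> {0,1,2} \<and> S \<noteq> {} \<and> S \<noteq> {0,1,2} \<longrightarrow>
        (\<exists>i\<in>S. \<exists>j\<in>{0,1,2} - S. a i j \<noteq> 0))"

definition in_M :: "(nat \<Rightarrow> nat \<Rightarrow> real) \<Rightarrow> bool" where
  "in_M a \<longleftrightarrow> (\<forall>i<3. \<forall>j<3. a i j = a j i) \<and> (\<forall>i<3. a i i = 0)
      \<and> (\<forall>i<3. \<forall>j<3. a i j \<ge> 0) \<and> irreducible3 a"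

definition in_MS :: "(nat \<Rightarrow> nat \<Rightarrow> real) \<Rightarrow> bool" where
  "in_MS a \<longleftrightarrow> in_M a \<and> a 0 1 = a 0 2"

definition Psi_term :: "real \<Rightarrow> (nat \<Rightarrow> nat \<Rightarrow> real) \<Rightarrow> (real \<times> real \<Rightarrow> real) \<Rightarrow> nat list \<Rightarrow> real" where
  "Psi_term r a f w = r powi (1 - int (length w)) * DF a (\<lambda>i. f (Fw w (q i))) (\<lambda>i. f (Fw w (q i)))"

definition Psi :: "real \<Rightarrow> (nat \<Rightarrow> nat \<Rightarrow> real) \<Rightarrow> nat list set \<Rightarrow> (real \<times> real \<Rightarrow> real) \<Rightarrow> real" where
  "Psi r a W f = (\<Sum>\<^sub>\<infinity>w\<in>W. Psi_term r a f w)"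

text \<open>Dom(Psi_r D): finite energy (the terms are nonnegative, so summability = finiteness).\<close>
definition PsiDom :: "real \<Rightarrow> (nat \<Rightarrow> nat \<Rightarrow> real) \<Rightarrow> nat list set \<Rightarrow> (real \<times> real \<Rightarrow> real) set" where
  "PsiDom r a W = {f. (Psi_term r a f) summable_on W}"

text \<open>Boundary condition f|_{V_0} = u.  q_0 lies in V_1, while q_1, q_2 are only accumulation
  points of V_1; there the value of f is understood as its limit along V_1.\<close>
definition restricts_to :: "nat list set \<Rightarrow> (real \<times> real \<Rightarrow> real) \<Rightarrow> (nat \<Rightarrow> real) \<Rightarrow> bool" where
  "restricts_to W f u \<longleftrightarrow> f (q 0) = u 0
      \<and> (f \<longlongrightarrow> u 1) (at (q 1) within V1 W) \<and> (f \<longlongrightarrow> u 2) (at (q 2) within V1 W)"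

definition R_r :: "real \<Rightarrow> (nat \<Rightarrow> nat \<Rightarrow> real) \<Rightarrow> nat list set \<Rightarrow> (nat \<Rightarrow> real) \<Rightarrow> real" where
  "R_r r a W u = Inf {Psi r a W f | f. f \<in> PsiDom r a W \<and> restricts_to W f u}"

end

theory Submission
  imports Defs
begin

text \<open>Evaluate \<open>R_r D = lam D\<close> at the boundary data \<open>u = (1, 0, 0)\<close>, where \<open>D(u, u) = 2 a\<^sub>0\<^sub>1\<close>.
  Every cell \<open>F_(s0)\<close> with \<open>s \<in> {1,2}\<^sup>*\<close> has its corners at the points \<open>F_s q\<^sub>0\<close>, \<open>F_(s1) q\<^sub>0\<close>, \<open>F_(s2) q\<^sub>0\<close>,
  so the energy is that of an electrical network whose edges from \<open>F_s q\<^sub>0\<close> have conductance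
  \<open>a\<^sub>0\<^sub>1 r\<^sup>-\<^sup>|\<^sup>s\<^sup>|\<close>.

  Upper bound: the function equal to \<open>1\<close> at \<open>q\<^sub>0\<close>, to \<open>t\<close> at \<open>F\<^sub>1 q\<^sub>0\<close> and \<open>F\<^sub>2 q\<^sub>0\<close> and to \<open>0\<close> further down
  has energy \<open>2 a\<^sub>0\<^sub>1 (1 - t)\<^sup>2 + 4 a\<^sub>0\<^sub>1 t\<^sup>2 / r\<close>, which is \<open>4 a\<^sub>0\<^sub>1 / (2 + r)\<close> at \<open>t = r / (2 + r)\<close>.

  Lower bound: keep only the cells along the two sides \<open>q\<^sub>0 q\<^sub>i\<close> up to depth \<open>N\<close>, together with three
  cells per side through which a path of five edges joins \<open>F\<^sub>i q\<^sub>0\<close> to \<open>F\<^sub>i F\<^sub>i q\<^sub>0\<close>, and drop all bottom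
  edges. By the series and parallel laws (Cauchy--Schwarz), each side is at least a single resistor
  of resistance \<open>(\<Sum>n<N. r\<^sup>n) - r / (2 + 2r + 2r\<^sup>2)\<close>; letting \<open>N \<rightarrow> \<infinity>\<close> gives
  \<open>R_r D(u) \<ge> 2 a\<^sub>0\<^sub>1 / (1 / (1 - r) - r / (2 + 2r + 2r\<^sup>2))\<close>.\<close>

lemma rho_pos: "0 < rho"
  unfolding rho_def by (simp add: real_less_rsqrt)

lemma rho_squared: "rho\<^sup>2 = 1 - rho"
  unfolding rho_def by (simp add: power2_eq_square field_simps algebra_simps)

lemma rho_bounds: "0.61 < rho" "rho < 0.62"
proof -
  have "2.22 < sqrt 5" by (rule real_less_rsqrt) (simp add: power2_eq_square)
  moreover have "sqrt 5 < sqrt (2.24\<^sup>2)" by (subst real_sqrt_less_iff) (simp add: power2_eq_square)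
  ultimately show "0.61 < rho" "rho < 0.62" unfolding rho_def by auto
qed

lemma rho_less_1: "rho < 1"
  using rho_bounds by simp

lemma rho_power_eq_iff: "rho ^ m = rho ^ n \<longleftrightarrow> m = n"
  using rho_pos rho_less_1 by (intro power_inject_exp') auto

lemma Fw_Nil [simp]: "Fw [] = id"
  by (simp add: Fw_def)

lemma Fw_Cons [simp]: "Fw (i # s) = F i \<circ> Fw s"
  by (simp add: Fw_def)

lemma Fw_append: "Fw (s @ t) = Fw s \<circ> Fw t"
  by (induction s) auto

lemma fst_F_1: "fst (F 1 x) = rho * fst x"
  by (simp add: F_def q_def)

lemma fst_F_2: "fst (F 2 x) = rho * fst x + 1 - rho"
  by (simp add: F_def q_def algebra_simps)

lemma snd_F: "i \<in> {1, 2} \<Longrightarrow> snd (F i x) = rho * snd x"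
  by (auto simp: F_def q_def algebra_simps)

definition apex :: "nat list \<Rightarrow> real \<times> real" where
  "apex s = Fw s (q 0)"

lemma apex_Nil: "apex [] = (1/2, sqrt 3 / 2)"
  by (simp add: apex_def q_def)

lemma apex_Cons: "apex (i # s) = F i (apex s)"
  by (simp add: apex_def)

lemma fst_apex_Cons:
  "fst (apex (1 # s)) = rho * fst (apex s)" "fst (apex (2 # s)) = rho * fst (apex s) + 1 - rho"
  unfolding apex_Cons by (rule fst_F_1, rule fst_F_2)

text \<open>Because \<open>rho\<^sup>2 + rho = 1\<close>, \<open>F 0\<close> maps \<open>q 1\<close> to \<open>F 1 (q 0)\<close> and \<open>q 2\<close> to \<open>F 2 (q 0)\<close>.\<close>
lemma cell_corners:
  "Fw (s @ [0]) (q 0) = apex s" "Fw (s @ [0]) (q 1) = apex (s @ [1])"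
  "Fw (s @ [0]) (q 2) = apex (s @ [2])"
proof -
  have F0: "F 0 x = (1 - rho) *\<^sub>R x + rho *\<^sub>R q 0" for x
    by (simp add: F_def rho_squared algebra_simps)
  have F1: "F 1 x = rho *\<^sub>R x" and F2: "F 2 x = rho *\<^sub>R x + (1 - rho) *\<^sub>R q 2" for x
    by (simp_all add: F_def q_def algebra_simps)
  have "F 0 (q 0) = q 0" "F 0 (q 1) = F 1 (q 0)" "F 0 (q 2) = F 2 (q 0)"
    unfolding F0 F1 F2 by (simp_all add: algebra_simps) (simp add: q_def)
  then show "Fw (s @ [0]) (q 0) = apex s" "Fw (s @ [0]) (q 1) = apex (s @ [1])"
    "Fw (s @ [0]) (q 2) = apex (s @ [2])"
    by (simp_all add: apex_def Fw_append)
qed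

lemma snd_apex: "set s \<subseteq> {1, 2} \<Longrightarrow> snd (apex s) = rho ^ length s * (sqrt 3 / 2)"
  by (induction s) (auto simp: apex_Nil apex_Cons snd_F)

lemma apex_eq_iff:
  assumes "set s \<subseteq> {1, 2}" "set t \<subseteq> {1, 2}"
  shows "apex s = apex t \<longleftrightarrow> length s = length t \<and> fst (apex s) = fst (apex t)"
  using snd_apex[OF assms(1)] snd_apex[OF assms(2)] by (auto simp: prod_eq_iff rho_power_eq_iff)

lemma fst_apex_replicate:
  "fst (apex (replicate n 1)) = rho ^ n / 2" "fst (apex (replicate n 2)) = 1 - rho ^ n / 2"
  by (induction n) (simp_all add: apex_Nil apex_Cons fst_F_1 fst_F_2 right_diff_distrib del: One_nat_def)

lemma fst_apex_short_words:
  "fst (apex [1]) = rho / 2" "fst (apex [2]) = 1 - rho / 2"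
  "fst (apex [1, 1]) = (1 - rho) / 2" "fst (apex [2, 2]) = (1 + rho) / 2"
  "fst (apex [1, 2]) = (3 * rho - 1) / 2" "fst (apex [2, 1]) = (3 - 3 * rho) / 2"
  "fst (apex [1, 1, 1]) = (2 * rho - 1) / 2" "fst (apex [2, 2, 2]) = (3 - 2 * rho) / 2"
  "fst (apex [1, 2, 1]) = (6 * rho - 3) / 2" "fst (apex [1, 1, 2]) = (3 - 4 * rho) / 2"
  "fst (apex [2, 1, 2]) = (5 - 6 * rho) / 2" "fst (apex [2, 2, 1]) = (4 * rho - 1) / 2"
  unfolding fst_apex_Cons apex_Nil fst_conv by (use rho_squared in algebra)+

lemma inj_on_apex_short_words:
  "inj_on apex {[], [1], [2], [1, 1], [2, 2], [1, 2], [2, 1],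
    [1, 1, 1], [2, 2, 2], [1, 2, 1], [1, 1, 2], [2, 1, 2], [2, 2, 1]}"
  using rho_bounds
  by (auto simp: inj_on_def apex_eq_iff fst_apex_short_words simp del: One_nat_def)

lemma apex_shunt_closes:
  assumes "i \<in> {1, 2}"
  shows "apex [i, 3 - i, i, i] = apex [i, i, 3 - i, 3 - i]"
proof -
  have "fst (apex [1, 2, 1, 1]) = fst (apex [1, 1, 2, 2])" "fst (apex [2, 1, 2, 2]) = fst (apex [2, 2, 1, 1])"
    unfolding fst_apex_Cons apex_Nil fst_conv by (use rho_squared in algebra)+
  then show ?thesis
    using assms by (auto simp: apex_eq_iff)
qed

lemma apex_in_V1:
  assumes "is_W1 W" "set s \<subseteq> {1, 2}"
  shows "apex s \<in> V1 W"
proof -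
  obtain v where "v \<in> W" "Fw v = Fw (s @ [0])"
    using assms unfolding is_W1_def words0_def by blast
  then show ?thesis
    unfolding V1_def using cell_corners(1)[of s] by force
qed

lemma apex_replicate_LIMSEQ:
  assumes i: "i \<in> {1, 2}"
  shows "(\<lambda>N. apex (replicate N i)) \<longlonglongrightarrow> q i"
proof -
  have words: "set (replicate N i) \<subseteq> {1, 2}" for N
    using i by (auto simp: set_replicate_conv_if)
  have rho_pow: "(\<lambda>N. rho ^ N) \<longlonglongrightarrow> 0"
    by (rule LIMSEQ_power_zero) (use rho_pos rho_less_1 in simp)
  then have "(\<lambda>N. rho ^ N * (sqrt 3 / 2)) \<longlonglongrightarrow> 0 * (sqrt 3 / 2)"
    by (rule tendsto_mult[OF _ tendsto_const])
  then have "(\<lambda>N. snd (apex (replicate N i))) \<longlonglongrightarrow> snd (q i)"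
    using i by (auto simp: snd_apex[OF words] q_def)
  moreover have "(\<lambda>N. fst (apex (replicate N i))) \<longlonglongrightarrow> fst (q i)"
  proof -
    have half: "(\<lambda>N. rho ^ N / 2) \<longlonglongrightarrow> 0"
      using rho_pow by (rule tendsto_divide_zero)
    have "(\<lambda>N. 1 - rho ^ N / 2) \<longlonglongrightarrow> 1 - 0"
      by (rule tendsto_diff[OF tendsto_const half])
    moreover have "fst (q 1) = 0" "fst (q 2) = 1 - 0"
      by (simp_all add: q_def)
    moreover have "i = 1 \<or> i = 2"
      using i by simp
    ultimately show ?thesis
      using half by (auto simp only: fst_apex_replicate)
  qed
  ultimately show ?thesis
    using tendsto_Pair by fastforce
qed

lemma DF_diag:
  assumes "in_M a"
  shows "DF a x x = a 0 1 * (x 0 - x 1)\<^sup>2 + a 0 2 * (x 0 - x 2)\<^sup>2 + a 1 2 * (x 1 - x 2)\<^sup>2"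
proof -
  have sym: "a 1 0 = a 0 1" "a 2 0 = a 0 2" "a 2 1 = a 1 2" and diag: "a 0 0 = 0" "a 1 1 = 0" "a 2 2 = 0"
    using assms unfolding in_M_def by auto
  have "DF a x x = (1/2) * (a 0 1 * (x 0 - x 1) * (x 0 - x 1) + a 0 2 * (x 0 - x 2) * (x 0 - x 2)
     + a 1 0 * (x 1 - x 0) * (x 1 - x 0) + a 1 2 * (x 1 - x 2) * (x 1 - x 2)
     + a 2 0 * (x 2 - x 0) * (x 2 - x 0) + a 2 1 * (x 2 - x 1) * (x 2 - x 1))"
    unfolding DF_def by (simp add: eval_nat_numeral algebra_simps)
  then show ?thesis
    unfolding sym diag by (simp add: power2_eq_square algebra_simps)
qed

lemma Psi_term_nonneg: "in_M a \<Longrightarrow> 0 < r \<Longrightarrow> 0 \<le> Psi_term r a f w"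
  by (auto simp: Psi_term_def DF_diag in_M_def intro!: mult_nonneg_nonneg add_nonneg_nonneg)

lemma Psi_term_cell:
  assumes "in_M a"
  shows "Psi_term r a f (s @ [0]) =
    (a 0 1 * (f (apex s) - f (apex (s @ [1])))\<^sup>2 + a 0 2 * (f (apex s) - f (apex (s @ [2])))\<^sup>2
      + a 1 2 * (f (apex (s @ [1])) - f (apex (s @ [2])))\<^sup>2) / r ^ length s"
  unfolding Psi_term_def DF_diag[OF assms] cell_corners
  by (simp add: power_int_minus divide_inverse mult.commute)

lemma in_MS_coeff_pos:
  assumes "in_MS a"
  shows "0 < a 0 1"
proof -
  have irr: "irreducible3 a" and "0 \<le> a 0 1" "a 0 2 = a 0 1"
    using assms by (auto simp: in_MS_def in_M_def)
  have "{0::nat} \<noteq> {0, 1, 2}" by auto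
  then have "\<exists>i\<in>{0::nat}. \<exists>j\<in>{0, 1, 2} - {0}. a i j \<noteq> 0"
    using irr unfolding irreducible3_def by (meson empty_subsetI insert_not_empty insert_subset insertI1)
  then have "a 0 1 \<noteq> 0 \<or> a 0 2 \<noteq> 0" by auto
  with \<open>0 \<le> a 0 1\<close> \<open>a 0 2 = a 0 1\<close> show ?thesis by auto
qed

text \<open>The energy of the two edges of the cell \<open>F_(s0)\<close> at its top corner; the bottom edge is dropped.\<close>
definition upper_edges_energy :: "real \<Rightarrow> real \<Rightarrow> (real \<times> real \<Rightarrow> real) \<Rightarrow> nat list \<Rightarrow> real" where
  "upper_edges_energy b r f s = b * (\<Sum>k\<in>{1, 2}. (f (apex s) - f (apex (s @ [k])))\<^sup>2) / r ^ length s"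

lemma upper_edges_energy_le_Psi_term:
  assumes "in_MS a" "0 < r"
  shows "upper_edges_energy (a 0 1) r f s \<le> Psi_term r a f (s @ [0])"
proof -
  have "in_M a" "a 0 2 = a 0 1" "0 \<le> a 1 2" using assms(1) by (auto simp: in_MS_def in_M_def)
  then have "a 0 1 * (\<Sum>k\<in>{1, 2}. (f (apex s) - f (apex (s @ [k])))\<^sup>2)
      \<le> a 0 1 * (f (apex s) - f (apex (s @ [1])))\<^sup>2 + a 0 2 * (f (apex s) - f (apex (s @ [2])))\<^sup>2
        + a 1 2 * (f (apex (s @ [1])) - f (apex (s @ [2])))\<^sup>2"
    by (simp add: distrib_left)
  then show ?thesis
    unfolding upper_edges_energy_def Psi_term_cell[OF \<open>in_M a\<close>]
    using assms(2) by (intro divide_right_mono) auto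
qed

lemma upper_edges_energy_letters:
  assumes "i \<in> {1, 2}"
  shows "upper_edges_energy b r f s = b * (f (apex s) - f (apex (s @ [i])))\<^sup>2 / r ^ length s
    + b * (f (apex s) - f (apex (s @ [3 - i])))\<^sup>2 / r ^ length s"
proof -
  have "{1, 2} = {i, 3 - i}" "i \<noteq> 3 - i" using assms by auto
  then show ?thesis
    unfolding upper_edges_energy_def by (simp add: distrib_left add_divide_distrib)
qed

lemma sum_cells_le_Psi:
  assumes W: "is_W1 W" and a: "in_M a" and r: "0 < r" and f: "f \<in> PsiDom r a W"
    and S: "finite S" "\<And>s. s \<in> S \<Longrightarrow> set s \<subseteq> {1, 2}" and inj: "inj_on apex S"
  shows "(\<Sum>s\<in>S. Psi_term r a f (s @ [0])) \<le> Psi r a W f"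
proof -
  have "\<forall>s\<in>S. \<exists>v\<in>W. Fw v = Fw (s @ [0])"
    using W S(2) unfolding is_W1_def words0_def by blast
  then obtain g where g: "\<And>s. s \<in> S \<Longrightarrow> g s \<in> W \<and> Fw (g s) = Fw (s @ [0])"
    by metis
  have g_apex: "apex s = Fw (g s) (q 0)" if "s \<in> S" for s
    using g[OF that] cell_corners(1) by metis
  have g_term: "Psi_term r a f (g s) = Psi_term r a f (s @ [0])" if s: "s \<in> S" for s
  proof -
    obtain t where t: "g s = t @ [0]" "set t \<subseteq> {1, 2}"
      using g[OF s] W unfolding is_W1_def words0_def by blast
    then have "apex t = apex s"
      using g_apex[OF s] cell_corners(1)[of t] by simp
    then have "length t = length s"
      using apex_eq_iff t(2) S(2)[OF s] by blast
    then show ?thesis using g[OF s] t(1) by (simp add: Psi_term_def)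
  qed
  have "inj_on g S"
  proof (rule inj_onI)
    fix s s' assume "s \<in> S" "s' \<in> S" "g s = g s'"
    then show "s = s'" using g_apex inj by (metis inj_onD)
  qed
  then have "(\<Sum>s\<in>S. Psi_term r a f (s @ [0])) = (\<Sum>v\<in>g ` S. Psi_term r a f v)"
    by (simp add: sum.reindex g_term)
  also have "\<dots> = infsum (Psi_term r a f) (g ` S)"
    using S(1) by simp
  also have "\<dots> \<le> Psi r a W f"
    unfolding Psi_def using S(1) f g Psi_term_nonneg[OF a r]
    by (intro infsum_mono2) (auto simp: PsiDom_def)
  finally show ?thesis .
qed

text \<open>For voltage drops \<open>d\<close> across resistances \<open>R\<close>
  it says that resistors in series dissipate at least as much as one resistor of their total resistance.\<close>
lemma series_energy_le:
  fixes ps :: "(real \<times> real) list"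
  assumes "\<forall>(d, R) \<in> set ps. 0 < R"
  shows "(\<Sum>(d, R)\<leftarrow>ps. d)\<^sup>2 / (\<Sum>(d, R)\<leftarrow>ps. R) \<le> (\<Sum>(d, R)\<leftarrow>ps. d\<^sup>2 / R)"
  using assms
proof (induction ps)
  case Nil
  then show ?case by simp
next
  case (Cons p ps)
  obtain d R where p: "p = (d, R)" by fastforce
  define D where "D = (\<Sum>(d, R)\<leftarrow>ps. d)"
  define S where "S = (\<Sum>(d, R)\<leftarrow>ps. R)"
  have R: "0 < R" using Cons.prems p by auto
  have IH: "D\<^sup>2 / S \<le> (\<Sum>(d, R)\<leftarrow>ps. d\<^sup>2 / R)"
    using Cons unfolding D_def S_def by auto
  have two: "(d + D)\<^sup>2 / (R + S) \<le> d\<^sup>2 / R + D\<^sup>2 / S"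
  proof (cases "ps = []")
    case False
    then obtain d' R' ps' where "ps = (d', R') # ps'" by (metis list.exhaust prod.exhaust)
    moreover have "0 \<le> (\<Sum>(d, R)\<leftarrow>ps'. R)"
      using Cons.prems \<open>ps = (d', R') # ps'\<close> by (intro sum_list_nonneg) auto
    ultimately have "0 < S"
      using Cons.prems unfolding S_def by auto
    then have "d\<^sup>2 / R + D\<^sup>2 / S - (d + D)\<^sup>2 / (R + S) = (d * S - D * R)\<^sup>2 / (R * S * (R + S))"
      using R by (simp add: field_simps power2_eq_square)
    also have "\<dots> \<ge> 0" using R \<open>0 < S\<close> by simp
    finally show ?thesis by simp
  qed (simp add: D_def S_def)
  have "(\<Sum>(d, R)\<leftarrow>p # ps. d) = d + D" "(\<Sum>(d, R)\<leftarrow>p # ps. R) = R + S"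
    "(\<Sum>(d, R)\<leftarrow>p # ps. d\<^sup>2 / R) = d\<^sup>2 / R + (\<Sum>(d, R)\<leftarrow>ps. d\<^sup>2 / R)"
    by (simp_all add: p D_def S_def)
  then show ?case using two IH by (simp only:)
qed

text \<open>A chain of resistors \<open>r\<^sup>n\<close> from \<open>x 0\<close> to \<open>x N\<close>, where the link from \<open>x 1\<close> to \<open>x 2\<close> is shunted
  by a path of five resistors through \<open>y1, \<dots>, y4\<close> of total resistance \<open>r * (1 + 2 * r + 2 * r\<^sup>2)\<close>;
  the parallel combination lowers the total resistance by exactly \<open>r / (2 + 2 * r + 2 * r\<^sup>2)\<close>.\<close>
lemma shunted_chain_energy_ge:
  fixes r y1 y2 y3 y4 :: real and x :: "nat \<Rightarrow> real"
  assumes r: "0 < r" and N: "2 \<le> N"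
  shows "(x 0 - x N)\<^sup>2 / ((\<Sum>n<N. r ^ n) - r / (2 + 2 * r + 2 * r\<^sup>2))
    \<le> (\<Sum>n<N. (x n - x (Suc n))\<^sup>2 / r ^ n)
      + ((x 1 - y1)\<^sup>2 / r + (y1 - y2)\<^sup>2 / r\<^sup>2 + (y2 - y3)\<^sup>2 / r ^ 3 + (y4 - y3)\<^sup>2 / r ^ 3 + (x 2 - y4)\<^sup>2 / r\<^sup>2)"
    (is "_ \<le> _ + ?shunt")
proof -
  define K where "K = 2 + 2 * r + 2 * r\<^sup>2"
  have K: "1 < K" using r unfolding K_def by (simp add: add_pos_pos)
  let ?path = "[(x 1 - y1, r), (y1 - y2, r\<^sup>2), (y2 - y3, r ^ 3), (y3 - y4, r ^ 3), (y4 - x 2, r\<^sup>2)]"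
  have "(x 1 - x 2)\<^sup>2 / (r * (K - 1)) = (\<Sum>(d, R)\<leftarrow>?path. d)\<^sup>2 / (\<Sum>(d, R)\<leftarrow>?path. R)"
    by (simp add: K_def power2_eq_square power3_eq_cube algebra_simps)
  also have "\<dots> \<le> (\<Sum>(d, R)\<leftarrow>?path. d\<^sup>2 / R)"
    by (rule series_energy_le) (use r in auto)
  also have "\<dots> = ?shunt"
    by (simp add: power2_commute)
  finally have shunt: "(x 1 - x 2)\<^sup>2 / (r * (K - 1)) \<le> ?shunt" .
  define R where "R n = r ^ n - (if n = 1 then r / K else 0)" for n
  have R_pos: "0 < R n" for n
    using r K by (auto simp: R_def field_simps)
  have parallel: "(x n - x (Suc n))\<^sup>2 / R n
      = (x n - x (Suc n))\<^sup>2 / r ^ n + (if n = 1 then (x 1 - x 2)\<^sup>2 / (r * (K - 1)) else 0)" for n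
    using r K by (auto simp: R_def field_simps numeral_2_eq_2)
  have "(\<Sum>n<N. r ^ n) - r / K = (\<Sum>n<N. R n)"
    using N by (simp add: R_def sum_subtractf)
  then have "(x 0 - x N)\<^sup>2 / ((\<Sum>n<N. r ^ n) - r / K) = (x 0 - x N)\<^sup>2 / (\<Sum>n<N. R n)"
    by simp
  also have "\<dots> \<le> (\<Sum>n<N. (x n - x (Suc n))\<^sup>2 / R n)"
    using series_energy_le[of "map (\<lambda>n. (x n - x (Suc n), R n)) [0..<N]"] R_pos
    by (simp add: interv_sum_list_conv_sum_set_nat atLeast0LessThan sum_lessThan_telescope')
  also have "\<dots> = (\<Sum>n<N. (x n - x (Suc n))\<^sup>2 / r ^ n) + (x 1 - x 2)\<^sup>2 / (r * (K - 1))"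
    using N by (simp add: parallel sum.distrib)
  finally show ?thesis
    using shunt unfolding K_def by linarith
qed

text \<open>The cells along the side from \<open>q 0\<close> to \<open>q i\<close>, and the three cells carrying the shunt path of
  \<open>shunted_chain_energy_ge\<close> from \<open>apex [i]\<close> to \<open>apex [i, i]\<close>.\<close>
definition side_cells :: "nat \<Rightarrow> nat \<Rightarrow> nat list set" where
  "side_cells i N = (\<lambda>n. replicate n i) ` {1..<N} \<union> {[i, 3 - i], [i, 3 - i, i], [i, i, 3 - i]}"

lemma finite_side_cells: "finite (side_cells i N)"
  by (simp add: side_cells_def)

lemma side_cells_hd: "s \<in> side_cells i N \<Longrightarrow> s \<noteq> [] \<and> hd s = i"
  by (auto simp: side_cells_def)

lemma sum_side_cells:
  "(\<Sum>s\<in>side_cells i N. g s)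
    = (\<Sum>n\<in>{1..<N}. g (replicate n i)) + g [i, 3 - i] + g [i, 3 - i, i] + g [i, i, 3 - i]"
proof -
  have ne: "3 - i \<noteq> i" by arith
  have "inj_on (\<lambda>n. replicate n i) {1..<N}"
    by (rule inj_onI) (metis length_replicate)
  moreover have "(\<lambda>n. replicate n i) ` {1..<N} \<inter> {[i, 3 - i], [i, 3 - i, i], [i, i, 3 - i]} = {}"
  proof -
    have "3 - i \<notin> set (replicate n i)" for n
      using ne by (simp add: set_replicate_conv_if)
    moreover have "3 - i \<in> set w" if "w \<in> {[i, 3 - i], [i, 3 - i, i], [i, i, 3 - i]}" for w
      using that by auto
    ultimately show ?thesis by blast
  qed
  ultimately show ?thesis
    unfolding side_cells_def using ne by (simp add: sum.union_disjoint sum.reindex ac_simps)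
qed

lemma side_cells_energy_ge:
  assumes i: "i \<in> {1, 2}" and r: "0 < r" and b: "0 \<le> b" and N: "3 \<le> N"
  shows "b * (f (apex []) - f (apex (replicate N i)))\<^sup>2 / ((\<Sum>n<N. r ^ n) - r / (2 + 2 * r + 2 * r\<^sup>2))
    \<le> b * (f (apex []) - f (apex [i]))\<^sup>2 + (\<Sum>s\<in>side_cells i N. upper_edges_energy b r f s)"
proof -
  define j where "j = 3 - i"
  define E where "E = upper_edges_energy b r f"
  define x where "x n = f (apex (replicate n i))" for n
  define y1 y2 y3 y4 where "y1 = f (apex [i, j])" and "y2 = f (apex [i, j, i])"
    and "y3 = f (apex [i, j, i, i])" and "y4 = f (apex [i, i, j])"
  have E: "E s = b * (f (apex s) - f (apex (s @ [i])))\<^sup>2 / r ^ length s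
      + b * (f (apex s) - f (apex (s @ [j])))\<^sup>2 / r ^ length s" for s
    unfolding E_def j_def using upper_edges_energy_letters[OF i] .
  have edge_nonneg: "0 \<le> b * c\<^sup>2 / r ^ k" for c k
    using b r by simp
  have edge_le: "b * (f (apex s) - f (apex (s @ [i])))\<^sup>2 / r ^ length s \<le> E s"
    "b * (f (apex s) - f (apex (s @ [j])))\<^sup>2 / r ^ length s \<le> E s" for s
    unfolding E using edge_nonneg by (simp_all add: add_increasing add_increasing2)
  have spine: "b * (x n - x (Suc n))\<^sup>2 / r ^ n + (if n = 1 then b * (x 1 - y1)\<^sup>2 / r else 0)
      + (if n = 2 then b * (x 2 - y4)\<^sup>2 / r\<^sup>2 else 0) \<le> E (replicate n i)" for n
  proof -
    have "E (replicate n i) = b * (x n - x (Suc n))\<^sup>2 / r ^ n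
        + b * (x n - f (apex (replicate n i @ [j])))\<^sup>2 / r ^ n"
      unfolding E x_def by (simp add: replicate_append_same)
    moreover have "replicate 1 i @ [j] = [i, j]" "replicate 2 i @ [j] = [i, i, j]"
      by (simp_all add: numeral_2_eq_2)
    ultimately show ?thesis
      using edge_nonneg[of "x n - f (apex (replicate n i @ [j]))" n]
      by (auto simp: y1_def y4_def)
  qed
  have shunt: "b * (y1 - y2)\<^sup>2 / r\<^sup>2 \<le> E [i, j]" "b * (y2 - y3)\<^sup>2 / r ^ 3 \<le> E [i, j, i]"
    "b * (y4 - y3)\<^sup>2 / r ^ 3 \<le> E [i, i, j]"
    using edge_le(1)[of "[i, j]"] edge_le(1)[of "[i, j, i]"] edge_le(2)[of "[i, i, j]"]
      apex_shunt_closes[OF i, folded j_def]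
    by (simp_all add: y1_def y2_def y3_def y4_def eval_nat_numeral)
  have "(\<Sum>n\<in>{1..<N}. b * (x n - x (Suc n))\<^sup>2 / r ^ n) + b * (x 1 - y1)\<^sup>2 / r + b * (x 2 - y4)\<^sup>2 / r\<^sup>2
      \<le> (\<Sum>n\<in>{1..<N}. E (replicate n i))"
  proof -
    have "1 \<in> {1..<N}" "2 \<in> {1..<N}" using N by auto
    moreover have "(\<Sum>n\<in>{1..<N}. b * (x n - x (Suc n))\<^sup>2 / r ^ n + (if n = 1 then b * (x 1 - y1)\<^sup>2 / r else 0)
        + (if n = 2 then b * (x 2 - y4)\<^sup>2 / r\<^sup>2 else 0)) \<le> (\<Sum>n\<in>{1..<N}. E (replicate n i))"
      by (rule sum_mono) (rule spine)
    ultimately show ?thesis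
      by (simp add: sum.distrib)
  qed
  moreover
  define Z where "Z = (\<Sum>n<N. r ^ n) - r / (2 + 2 * r + 2 * r\<^sup>2)"
  define S where "S = (\<Sum>n<N. (x n - x (Suc n))\<^sup>2 / r ^ n)"
  define L where "L = (x 1 - y1)\<^sup>2 / r + (y1 - y2)\<^sup>2 / r\<^sup>2 + (y2 - y3)\<^sup>2 / r ^ 3
    + (y4 - y3)\<^sup>2 / r ^ 3 + (x 2 - y4)\<^sup>2 / r\<^sup>2"
  have "(x 0 - x N)\<^sup>2 / Z \<le> S + L"
    unfolding Z_def S_def L_def using shunted_chain_energy_ge[OF r] N by simp
  then have "b * ((x 0 - x N)\<^sup>2 / Z) \<le> b * S + b * L"
    unfolding distrib_left[symmetric] using b by (rule mult_left_mono)
  moreover have "b * S = b * (x 0 - x 1)\<^sup>2 + (\<Sum>n\<in>{1..<N}. b * (x n - x (Suc n))\<^sup>2 / r ^ n)"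
  proof -
    have "(\<Sum>n<N. g n) = g 0 + (\<Sum>n\<in>{1..<N}. g n)" for g :: "nat \<Rightarrow> real"
      using N by (simp add: lessThan_atLeast0 sum.atLeast_Suc_lessThan)
    then show ?thesis
      unfolding S_def sum_distrib_left by (simp add: mult.assoc)
  qed
  moreover have "b * L = b * (x 1 - y1)\<^sup>2 / r + b * (y1 - y2)\<^sup>2 / r\<^sup>2 + b * (y2 - y3)\<^sup>2 / r ^ 3
    + b * (y4 - y3)\<^sup>2 / r ^ 3 + b * (x 2 - y4)\<^sup>2 / r\<^sup>2"
    unfolding L_def by (simp add: distrib_left)
  ultimately show ?thesis
    using shunt unfolding sum_side_cells E_def[symmetric] j_def[symmetric] Z_def[symmetric]
    by (simp add: x_def)
qed

definition ladder_cells :: "nat \<Rightarrow> nat list set" where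
  "ladder_cells N = insert [] (side_cells 1 N \<union> side_cells 2 N)"

lemma ladder_cells_words: "s \<in> ladder_cells N \<Longrightarrow> set s \<subseteq> {1, 2}"
  by (auto simp: ladder_cells_def side_cells_def)

lemma ladder_cells_cases:
  assumes "u \<in> ladder_cells N"
  obtains "u = []"
    | n k where "k \<in> {1, 2}" "1 \<le> n" "u = replicate n k"
    | k where "k \<in> {1, 2}" "u \<in> {[k, 3 - k], [k, 3 - k, k], [k, k, 3 - k]}"
proof -
  consider "u = []" | k where "k \<in> {1, 2}" "u \<in> side_cells k N"
    using assms unfolding ladder_cells_def by blast
  then show thesis
  proof cases
    case (2 k)
    then consider n where "n \<in> {1..<N}" "u = replicate n k"
      | "u \<in> {[k, 3 - k], [k, 3 - k, k], [k, k, 3 - k]}"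
      unfolding side_cells_def by blast
    then show thesis
      by cases (use that 2 in auto)
  qed (use that in auto)
qed

lemma inj_on_apex_ladder_cells: "inj_on apex (ladder_cells N)"
proof (rule inj_onI)
  fix s t assume s: "s \<in> ladder_cells N" and t: "t \<in> ladder_cells N" and eq: "apex s = apex t"
  then have len: "length s = length t" and fst_eq: "fst (apex s) = fst (apex t)"
    using apex_eq_iff ladder_cells_words by blast+
  show "s = t"
  proof (cases "length s \<le> 3")
    case True
    let ?short = "{[], [1], [2], [1, 1], [2, 2], [1, 2], [2, 1],
      [1, 1, 1], [2, 2, 2], [1, 2, 1], [1, 1, 2], [2, 1, 2], [2, 2, 1]} :: nat list set"
    have short_cells: "u \<in> ?short" if u: "u \<in> ladder_cells N" and short: "length u \<le> 3" for u
      using u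
    proof (cases rule: ladder_cells_cases)
      case (2 n k)
      then have "n \<in> {1, 2, 3}" using short by auto
      with \<open>k \<in> {1, 2}\<close> show ?thesis
        unfolding \<open>u = replicate n k\<close> by (elim insertE emptyE) (simp_all add: numeral_eq_Suc)
    next
      case (3 k)
      then show ?thesis by (elim insertE emptyE) simp_all
    qed simp
    then have "s \<in> ?short" "t \<in> ?short"
      using short_cells[OF s] short_cells[OF t] len True by simp_all
    then show ?thesis
      using inj_on_apex_short_words eq by (meson inj_onD)
  next
    case False
    obtain k k' where k: "s = replicate (length s) k" "k \<in> {1, 2}"
      and k': "t = replicate (length s) k'" "k' \<in> {1, 2}"
    proof -
      have "\<exists>k\<in>{1, 2}. u = replicate (length s) k" if "u \<in> ladder_cells N" "length u = length s" for u
        using that(1)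
      proof (cases rule: ladder_cells_cases)
        case (2 n k)
        then show ?thesis using that(2) by auto
      qed (use False that(2) in auto)
      then show ?thesis using that s t len by metis
    qed
    have "rho ^ length s \<noteq> rho ^ 0"
      using False by (subst rho_power_eq_iff) auto
    then have "k = k'"
      using fst_eq k k' fst_apex_replicate[of "length s"] by (auto simp del: One_nat_def)
    then show ?thesis
      using k k' by simp
  qed
qed

lemma Psi_ge_ladder_energy:
  assumes W: "is_W1 W" and a: "in_MS a" and r: "0 < r" and f: "f \<in> PsiDom r a W" and N: "3 \<le> N"
  shows "a 0 1 * ((f (apex []) - f (apex (replicate N 1)))\<^sup>2 + (f (apex []) - f (apex (replicate N 2)))\<^sup>2)
      / ((\<Sum>n<N. r ^ n) - r / (2 + 2 * r + 2 * r\<^sup>2)) \<le> Psi r a W f"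
proof -
  define b where "b = a 0 1"
  define E where "E = upper_edges_energy b r f"
  have b: "0 \<le> b" using in_MS_coeff_pos[OF a] by (simp add: b_def)
  have M: "in_M a" using a by (simp add: in_MS_def)
  have "side_cells 1 N \<inter> side_cells 2 N = {}"
    using side_cells_hd[of _ 1 N] side_cells_hd[of _ 2 N] by fastforce
  moreover have "[] \<notin> side_cells 1 N \<union> side_cells 2 N"
    using side_cells_hd by blast
  ultimately have "(\<Sum>s\<in>ladder_cells N. E s) = E [] + (\<Sum>s\<in>side_cells 1 N. E s) + (\<Sum>s\<in>side_cells 2 N. E s)"
    unfolding ladder_cells_def using finite_side_cells by (simp add: sum.union_disjoint)
  moreover have "E [] = b * (f (apex []) - f (apex [1]))\<^sup>2 + b * (f (apex []) - f (apex [2]))\<^sup>2"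
    by (simp add: E_def upper_edges_energy_def distrib_left)
  moreover have "(\<Sum>s\<in>ladder_cells N. E s) \<le> (\<Sum>s\<in>ladder_cells N. Psi_term r a f (s @ [0]))"
    unfolding E_def b_def by (intro sum_mono upper_edges_energy_le_Psi_term a r)
  moreover have "\<dots> \<le> Psi r a W f"
    using sum_cells_le_Psi[OF W M r f _ ladder_cells_words inj_on_apex_ladder_cells] finite_side_cells
    by (simp add: ladder_cells_def)
  ultimately show ?thesis
    using side_cells_energy_ge[of 1 r b N f] side_cells_energy_ge[of 2 r b N f] r b N
    unfolding E_def b_def[symmetric] by (simp add: distrib_left add_divide_distrib)
qed

lemma restricts_to_tendsto:
  assumes W: "is_W1 W" and f: "restricts_to W f u" and i: "i \<in> {1, 2}"
  shows "(\<lambda>N. f (apex (replicate N i))) \<longlonglongrightarrow> u i"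
proof -
  have "(f \<longlongrightarrow> u i) (at (q i) within V1 W)"
    using f i unfolding restricts_to_def by auto
  moreover have "filterlim (\<lambda>N. apex (replicate N i)) (at (q i) within V1 W) sequentially"
    unfolding filterlim_at
  proof
    have words: "set (replicate N i) \<subseteq> {1, 2}" for N
      using i by (auto simp: set_replicate_conv_if)
    have "snd (apex (replicate N i)) \<noteq> snd (q i)" for N
      using i rho_pos unfolding snd_apex[OF words] by (auto simp: q_def)
    then show "\<forall>\<^sub>F N in sequentially. apex (replicate N i) \<in> V1 W \<and> apex (replicate N i) \<noteq> q i"
      using apex_in_V1[OF W words] by (intro always_eventually) metis
  qed (rule apex_replicate_LIMSEQ[OF i])
  ultimately show ?thesis
    by (rule filterlim_compose)
qed

lemma Psi_ge_unit_boundary: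
  assumes W: "is_W1 W" and a: "in_MS a" and r: "0 < r" "r < 1"
    and f: "f \<in> PsiDom r a W" "restricts_to W f (\<lambda>i. if i = 0 then 1 else 0)"
  shows "2 * a 0 1 / (1 / (1 - r) - r / (2 + 2 * r + 2 * r\<^sup>2)) \<le> Psi r a W f"
proof -
  define K where "K = 2 + 2 * r + 2 * r\<^sup>2"
  define Z where "Z = 1 / (1 - r) - r / K"
  define e where "e N = (f (apex []) - f (apex (replicate N 1)))\<^sup>2
    + (f (apex []) - f (apex (replicate N 2)))\<^sup>2" for N
  have "r / K < 1"
    using r unfolding K_def by (simp add: add_pos_pos)
  have chain: "0 < (\<Sum>n<N. r ^ n) - r / K \<and> (\<Sum>n<N. r ^ n) - r / K \<le> Z" if "1 \<le> N" for N
  proof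
    have "(\<Sum>n<1. r ^ n) \<le> (\<Sum>n<N. r ^ n)"
      using that r by (intro sum_mono2) auto
    then show "0 < (\<Sum>n<N. r ^ n) - r / K"
      using \<open>r / K < 1\<close> by simp
    have "(\<Sum>n<N. r ^ n) = (1 - r ^ N) / (1 - r)"
      using r by (simp add: sum_gp_strict)
    also have "\<dots> \<le> 1 / (1 - r)"
      using r by (intro divide_right_mono) auto
    finally show "(\<Sum>n<N. r ^ n) - r / K \<le> Z"
      unfolding Z_def by simp
  qed
  have "0 < Z"
    using chain[of 1] by simp
  have "f (apex []) = 1"
    using f(2) by (simp add: restricts_to_def apex_def)
  moreover have "(\<lambda>N. f (apex (replicate N 1))) \<longlonglongrightarrow> 0" "(\<lambda>N. f (apex (replicate N 2))) \<longlonglongrightarrow> 0"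
    using restricts_to_tendsto[OF W f(2), of 1] restricts_to_tendsto[OF W f(2), of 2] by simp_all
  ultimately have "(\<lambda>N. a 0 1 * e N / Z) \<longlonglongrightarrow> a 0 1 * ((1 - 0)\<^sup>2 + (1 - 0)\<^sup>2) / Z"
    unfolding e_def using \<open>0 < Z\<close> by (intro tendsto_intros) auto
  moreover have "a 0 1 * e N / Z \<le> Psi r a W f" if "3 \<le> N" for N
  proof -
    have "a 0 1 * e N / Z \<le> a 0 1 * e N / ((\<Sum>n<N. r ^ n) - r / K)"
      using chain[of N] that in_MS_coeff_pos[OF a] by (intro divide_left_mono) (auto simp: e_def)
    also have "\<dots> \<le> Psi r a W f"
      using Psi_ge_ladder_energy[OF W a r(1) f(1) that] unfolding e_def K_def .
    finally show ?thesis .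
  qed
  ultimately have "a 0 1 * ((1 - 0)\<^sup>2 + (1 - 0)\<^sup>2) / Z \<le> Psi r a W f"
    by (intro LIMSEQ_le_const2) auto
  then show ?thesis
    unfolding Z_def K_def by (simp add: mult.commute)
qed

definition tent :: "real \<Rightarrow> real \<times> real \<Rightarrow> real" where
  "tent t x = (if snd x = snd (q 0) then 1 else if snd x = rho * snd (q 0) then t else 0)"

lemma tent_apex:
  assumes "set s \<subseteq> {1, 2}"
  shows "tent t (apex s) = (if length s = 0 then 1 else if length s = 1 then t else 0)"
proof -
  have "rho ^ length s = rho ^ 0 \<longleftrightarrow> length s = 0" "rho ^ length s = rho ^ 1 \<longleftrightarrow> length s = 1"
    by (simp_all only: rho_power_eq_iff)
  then show ?thesis
    unfolding tent_def snd_apex[OF assms] by (simp add: q_def)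
qed

lemma restricts_to_tent: "restricts_to W (tent t) (\<lambda>i. if i = 0 then 1 else 0)"
proof -
  have below: "0 < rho * snd (q 0)" "rho * snd (q 0) < snd (q 0)"
    using rho_pos rho_less_1 by (simp_all add: q_def)
  have "(tent t \<longlongrightarrow> 0) (at p within V1 W)" if "snd p = 0" for p
  proof -
    have "((\<lambda>x. snd x) \<longlongrightarrow> snd p) (at p within V1 W)"
      by (intro tendsto_intros)
    then have "\<forall>\<^sub>F x in at p within V1 W. snd x < rho * snd (q 0)"
      using that below by (auto dest: order_tendstoD)
    then have "\<forall>\<^sub>F x in at p within V1 W. tent t x = 0"
      by eventually_elim (use below in \<open>auto simp: tent_def\<close>)
    then show ?thesis
      by (rule tendsto_eventually)
  qed
  then show ?thesis
    unfolding restricts_to_def by (simp add: tent_def q_def)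
qed

lemma Psi_tent_le:
  assumes W: "is_W1 W" and a: "in_MS a" and r: "0 < r"
  shows "tent t \<in> PsiDom r a W" "Psi r a W (tent t) \<le> 2 * a 0 1 * (1 - t)\<^sup>2 + 4 * a 0 1 * t\<^sup>2 / r"
proof -
  have M: "in_M a" and a02: "a 0 2 = a 0 1"
    using a by (auto simp: in_MS_def)
  let ?T = "{[0], [1, 0], [2, 0]}"
  have vanish: "Psi_term r a (tent t) v = 0" if v: "v \<in> W - ?T" for v
  proof -
    obtain s where v_eq: "v = s @ [0]" and s: "set s \<subseteq> {1, 2}"
      using v W unfolding is_W1_def words0_def by blast
    have "s \<noteq> []" "s \<noteq> [1]" "s \<noteq> [2]"
      using v v_eq by auto
    then have "2 \<le> length s"
      using s by (cases s; cases "tl s") auto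
    moreover have "set (s @ [1]) \<subseteq> {1, 2}" "set (s @ [2]) \<subseteq> {1, 2}"
      using s by auto
    ultimately show ?thesis
      using \<open>s \<noteq> []\<close> unfolding v_eq Psi_term_cell[OF M] by (simp add: tent_apex s)
  qed
  have "Psi_term r a (tent t) summable_on W \<inter> ?T"
    by simp
  moreover have "Psi_term r a (tent t) summable_on W \<inter> ?T \<longleftrightarrow> Psi_term r a (tent t) summable_on W"
    using vanish by (intro summable_on_cong_neutral) auto
  ultimately show "tent t \<in> PsiDom r a W"
    unfolding PsiDom_def by simp
  have "Psi r a W (tent t) = infsum (Psi_term r a (tent t)) (W \<inter> ?T)"
    unfolding Psi_def using vanish by (intro infsum_cong_neutral) auto
  also have "\<dots> = sum (Psi_term r a (tent t)) (W \<inter> ?T)"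
    by simp
  also have "\<dots> \<le> sum (Psi_term r a (tent t)) ?T"
    using Psi_term_nonneg[OF M r] by (intro sum_mono2) auto
  also have "\<dots> = 2 * a 0 1 * (1 - t)\<^sup>2 + 4 * a 0 1 * t\<^sup>2 / r"
    using Psi_term_cell[OF M, of r "tent t" "[]"] Psi_term_cell[OF M, of r "tent t" "[1]"]
      Psi_term_cell[OF M, of r "tent t" "[2]"]
    by (simp add: tent_apex a02 power2_eq_square)
  finally show "Psi r a W (tent t) \<le> 2 * a 0 1 * (1 - t)\<^sup>2 + 4 * a 0 1 * t\<^sup>2 / r" .
qed

text \<open>The height \<open>t\<close> minimises \<open>2 * (1 - t)\<^sup>2 + 4 * t\<^sup>2 / r\<close>.\<close>
lemma tent_energy_at_optimum:
  fixes b r :: real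
  assumes r: "0 < r"
  defines "t \<equiv> r / (2 + r)"
  shows "2 * b * (1 - t)\<^sup>2 + 4 * b * t\<^sup>2 / r = 2 * b * (2 / (2 + r))"
proof -
  have p: "0 < 2 + r" using r by simp
  have "t / r = 1 / (2 + r)"
    using r by (simp add: t_def)
  then have "t\<^sup>2 / r = r / (2 + r) * (1 / (2 + r))"
    by (simp add: power2_eq_square t_def[symmetric] flip: times_divide_eq_right)
  moreover have "1 - t = 2 / (2 + r)"
    using p by (simp add: t_def field_simps)
  ultimately have "2 * b * (1 - t)\<^sup>2 + 4 * b * t\<^sup>2 / r
      = 2 * b * (2 / (2 + r))\<^sup>2 + 4 * b * (r / (2 + r) * (1 / (2 + r)))"
    by (simp flip: times_divide_eq_right)
  also have "\<dots> = 4 * b * (2 + r) / ((2 + r) * (2 + r))"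
    by (simp add: power_divide power2_eq_square add_divide_distrib algebra_simps)
  also have "\<dots> = 2 * b * (2 / (2 + r))"
    using p by simp
  finally show ?thesis .
qed

lemma R_r_le_Psi:
  assumes "in_M a" "0 < r" "f \<in> PsiDom r a W" "restricts_to W f u"
  shows "R_r r a W u \<le> Psi r a W f"
  unfolding R_r_def
proof (rule cInf_lower)
  show "bdd_below {Psi r a W f |f. f \<in> PsiDom r a W \<and> restricts_to W f u}"
    using Psi_term_nonneg[OF assms(1,2)] unfolding Psi_def
    by (intro bdd_belowI[of _ 0]) (auto intro: infsum_nonneg)
qed (use assms in blast)

lemma R_r_ge:
  assumes "f \<in> PsiDom r a W" "restricts_to W f u"
    and "\<And>g. g \<in> PsiDom r a W \<Longrightarrow> restricts_to W g u \<Longrightarrow> c \<le> Psi r a W g"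
  shows "c \<le> R_r r a W u"
  unfolding R_r_def using assms by (intro cInf_greatest) auto

lemma R_r_unit_boundary_le:
  assumes W: "is_W1 W" and a: "in_MS a" and r: "0 < r"
  shows "R_r r a W (\<lambda>i. if i = 0 then 1 else 0) \<le> 2 * a 0 1 * (2 / (2 + r))"
proof -
  define t where "t = r / (2 + r)"
  have M: "in_M a" using a by (simp add: in_MS_def)
  have "R_r r a W (\<lambda>i. if i = 0 then 1 else 0) \<le> Psi r a W (tent t)"
    by (rule R_r_le_Psi[OF M r Psi_tent_le(1)[OF W a r] restricts_to_tent])
  also have "\<dots> \<le> 2 * a 0 1 * (1 - t)\<^sup>2 + 4 * a 0 1 * t\<^sup>2 / r"
    by (rule Psi_tent_le(2)[OF W a r])
  also have "\<dots> = 2 * a 0 1 * (2 / (2 + r))"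
    unfolding t_def using tent_energy_at_optimum[OF r] .
  finally show ?thesis .
qed

lemma R_r_unit_boundary_ge:
  assumes W: "is_W1 W" and a: "in_MS a" and r: "0 < r" "r < 1"
  shows "2 * a 0 1 / (1 / (1 - r) - r / (2 + 2 * r + 2 * r\<^sup>2)) \<le> R_r r a W (\<lambda>i. if i = 0 then 1 else 0)"
  using Psi_tent_le(1)[OF W a r(1)] restricts_to_tent
  by (rule R_r_ge) (rule Psi_ge_unit_boundary[OF W a r])

theorem lemma5p6:
  fixes r lam :: real and a :: "nat \<Rightarrow> nat \<Rightarrow> real" and W1 :: "nat list set"
  assumes "rho < r" and "r < 1"
    and "is_W1 W1"
    and "lam > 0"
    and "in_MS a"
    and "\<forall>u. R_r r a W1 u = lam * DF a u u"
  shows "inverse (1 / (1 - r) - r / (2 + 2 * r + 2 * r\<^sup>2)) \<le> lam \<and> lam \<le> 2 / (2 + r)"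
proof -
  have r: "0 < r" using assms(1) rho_pos by linarith
  have b: "0 < 2 * a 0 1" using in_MS_coeff_pos[OF assms(5)] by simp
  let ?u = "\<lambda>i :: nat. if i = 0 then 1 else 0 :: real"
  have "R_r r a W1 ?u = 2 * a 0 1 * lam"
    using assms(5,6) by (simp add: DF_diag in_MS_def)
  then have "2 * a 0 1 * lam \<le> 2 * a 0 1 * (2 / (2 + r))"
    and "2 * a 0 1 * inverse (1 / (1 - r) - r / (2 + 2 * r + 2 * r\<^sup>2)) \<le> 2 * a 0 1 * lam"
    using R_r_unit_boundary_le[OF assms(3,5) r] R_r_unit_boundary_ge[OF assms(3,5) r assms(2)]
    by (simp_all add: divide_inverse)
  then show ?thesis
    using b mult_left_le_imp_le by blast
qed

end
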